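(* Let $\Phi$ be an irreducible crystallographic root system with simple system $S$ and positive system $\Phi^+$, let $k$ be a positive integer, and let $\mathcal{I}=(I_1,\ldots,I_k)$ be a geometric chain of $k$ ideals in the root poset of $\Phi$. Define $\underline{\mathcal{I}}=(\underline{I}_1,\ldots,\underline{I}_{k+1})$ by $\underline{I}_i=I_i$ for $i\in\{1,\ldots,k\}$ and $\underline{I}_{k+1}=\bigcup_{i+j=k+1}\big((I_i+I_j)\cap\Phi^+\big)\cup I_k\cup S$. Then $\underline{\mathcal{I}}$ is a positive geometric chain of $k+1$ ideals, and the bounded dominant region $\underline{R}=\theta^{-1}(\underline{\mathcal{I}})$ of the $(k+1)$-Catalan arrangement of $\Phi$ is contained in the dominant region $R=\theta^{-1}(\mathcal{I})$ of the $k$-Catalan arrangement.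
   Context: $\Phi$ lives in a real Euclidean space $V$ with inner product $\langle\cdot,\cdot\rangle$; $H_\alpha^r=\{x\in V\mid\langle x,\alpha\rangle=r\}$. For a positive integer $K$, the $K$-Catalan arrangement consists of $H_\alpha^r$, $\alpha\in\Phi$, $r\in\{0,\ldots,K\}$; regions are connected components of its complement; $R$ is dominant if $\langle x,\alpha\rangle>0$ for all $\alpha\in\Phi^+$, $x\in R$. The root poset is $\Phi^+$ with $\alpha\le\beta$ iff $\beta-\alpha$ is a nonnegative integer combination of $S$; ideals are down-closed subsets, order filters up-closed subsets. Sums of sets are sumsets $A+B=\{a+b\mid a\in A,b\in B\}$. An ascending chain $I_1\subseteq\cdots\subseteq I_K$ of ideals, with corresponding order filters $J_i=\Phi^+\setminus I_i$, is geometric if $(I_i+I_j)\cap\Phi^+\subseteq I_{i+j}$ for all $i,j\in\{0,\ldots,K\}$ with $i+j\le K$, and $(J_i+J_j)\cap\Phi^+\subseteq J_{i+j}$ for all $i,j\in\{0,\ldots,K\}$, where $I_0=\varnothing$, $J_0=\Phi^+$ and $J_i=J_K$ for $i>K$. It is positive if $S\subseteq I_K$. For a dominant region $R$ of the $K$-Catalan arrangement, $\theta(R)=(I_1,\ldots,I_K)$ with $I_i=\{\alpha\in\Phi^+\mid\langle x,\alpha\rangle<i\text{ for all }x\in R\}$; it is known that $\theta$ is a bijection from dominant regions of the $K$-Catalan arrangement to geometric chains of $K$ ideals, restricting to a bijection between bounded dominant regions and positive geometric chains. In the union defining $\underline{I}_{k+1}$, $i,j$ range over $\{0,\ldots,k\}$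 with $I_0=\varnothing$. *)

theory Defs
  imports "HOL-Analysis.Analysis"
begin

definition refl_vec :: "'a::euclidean_space \<Rightarrow> 'a \<Rightarrow> 'a" where
  "refl_vec \<alpha> \<beta> = \<beta> - (2 * (\<beta> \<bullet> \<alpha>) / (\<alpha> \<bullet> \<alpha>)) *\<^sub>R \<alpha>"

definition crystallographic_root_system :: "'a::euclidean_space set \<Rightarrow> bool" where
  "crystallographic_root_system \<Phi> \<longleftrightarrow>
     finite \<Phi> \<and> 0 \<notin> \<Phi> \<and> span \<Phi> = UNIV \<and>
     (\<forall>\<alpha>\<in>\<Phi>. \<forall>c::real. c *\<^sub>R \<alpha> \<in> \<Phi> \<longrightarrow> c = 1 \<or> c = -1) \<and>
     (\<forall>\<alpha>\<in>\<Phi>. \<forall>\<beta>\<in>\<Phi>. refl_vec \<alpha> \<beta> \<in> \<Phi>) \<and>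
     (\<forall>\<alpha>\<in>\<Phi>. \<forall>\<beta>\<in>\<Phi>. 2 * (\<beta> \<bullet> \<alpha>) / (\<alpha> \<bullet> \<alpha>) \<in> \<int>)"

definition irreducible_root_system :: "'a::euclidean_space set \<Rightarrow> bool" where
  "irreducible_root_system \<Phi> \<longleftrightarrow>
     \<not> (\<exists>A B. A \<noteq> {} \<and> B \<noteq> {} \<and> A \<union> B = \<Phi> \<and> A \<inter> B = {} \<and>
            (\<forall>a\<in>A. \<forall>b\<in>B. a \<bullet> b = 0))"

definition simple_system :: "'a::euclidean_space set \<Rightarrow> 'a set \<Rightarrow> bool" where
  "simple_system \<Phi> S \<longleftrightarrow>
     S \<subseteq> \<Phi> \<and> independent S \<and> span S = UNIV \<and>
     (\<forall>\<alpha>\<in>\<Phi>. \<exists>c::'a \<Rightarrow> real. \<alpha> = (\<Sum>s\<in>S. c s *\<^sub>R s) \<and>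
                 ((\<forall>s\<in>S. c s \<ge> 0) \<or> (\<forall>s\<in>S. c s \<le> 0)))"

definition positive_roots :: "'a::euclidean_space set \<Rightarrow> 'a set \<Rightarrow> 'a set" where
  "positive_roots \<Phi> S =
     {\<alpha>\<in>\<Phi>. \<exists>c::'a \<Rightarrow> real. \<alpha> = (\<Sum>s\<in>S. c s *\<^sub>R s) \<and> (\<forall>s\<in>S. c s \<ge> 0)}"

definition root_le :: "'a::euclidean_space set \<Rightarrow> 'a \<Rightarrow> 'a \<Rightarrow> bool" where
  "root_le S \<alpha> \<beta> \<longleftrightarrow> (\<exists>n::'a \<Rightarrow> nat. \<beta> - \<alpha> = (\<Sum>s\<in>S. real (n s) *\<^sub>R s))"

definition root_ideal :: "'a::euclidean_space set \<Rightarrow> 'a set \<Rightarrow> 'a set \<Rightarrow> bool" where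
  "root_ideal \<Phi> S I \<longleftrightarrow>
     I \<subseteq> positive_roots \<Phi> S \<and>
     (\<forall>\<beta>\<in>I. \<forall>\<alpha>\<in>positive_roots \<Phi> S. root_le S \<alpha> \<beta> \<longrightarrow> \<alpha> \<in> I)"

definition sumset :: "'a::ab_group_add set \<Rightarrow> 'a set \<Rightarrow> 'a set" where
  "sumset A B = {a + b | a b. a \<in> A \<and> b \<in> B}"

section \<open>Chains of ideals (indexed 1..K; values outside are irrelevant)\<close>

definition Iext :: "(nat \<Rightarrow> 'a set) \<Rightarrow> nat \<Rightarrow> 'a set" where
  "Iext I i = (if i = 0 then {} else I i)"

definition Jext :: "'a::euclidean_space set \<Rightarrow> 'a set \<Rightarrow> nat \<Rightarrow> (nat \<Rightarrow> 'a set) \<Rightarrow> nat \<Rightarrow> 'a set" where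
  "Jext \<Phi> S K I i = (if i = 0 then positive_roots \<Phi> S
                       else positive_roots \<Phi> S - I (min i K))"

definition geometric_chain ::
  "'a::euclidean_space set \<Rightarrow> 'a set \<Rightarrow> nat \<Rightarrow> (nat \<Rightarrow> 'a set) \<Rightarrow> bool" where
  "geometric_chain \<Phi> S K I \<longleftrightarrow>
     (\<forall>i\<in>{1..K}. root_ideal \<Phi> S (I i)) \<and>
     (\<forall>i. 1 \<le> i \<and> i < K \<longrightarrow> I i \<subseteq> I (Suc i)) \<and>
     (\<forall>i\<le>K. \<forall>j\<le>K. i + j \<le> K \<longrightarrow>
        sumset (Iext I i) (Iext I j) \<inter> positive_roots \<Phi> S \<subseteq> Iext I (i + j)) \<and>
     (\<forall>i\<le>K. \<forall>j\<le>K.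
        sumset (Jext \<Phi> S K I i) (Jext \<Phi> S K I j) \<inter> positive_roots \<Phi> S
          \<subseteq> Jext \<Phi> S K I (i + j))"

definition positive_chain :: "'a set \<Rightarrow> nat \<Rightarrow> (nat \<Rightarrow> 'a set) \<Rightarrow> bool" where
  "positive_chain S K I \<longleftrightarrow> S \<subseteq> I K"

definition catalan_complement :: "'a::euclidean_space set \<Rightarrow> nat \<Rightarrow> 'a set" where
  "catalan_complement \<Phi> K =
     UNIV - {x. \<exists>\<alpha>\<in>\<Phi>. \<exists>r\<in>{0..K}. x \<bullet> \<alpha> = real r}"

definition catalan_region :: "'a::euclidean_space set \<Rightarrow> nat \<Rightarrow> 'a set \<Rightarrow> bool" where
  "catalan_region \<Phi> K R \<longleftrightarrow>
     (\<exists>x\<in>catalan_complement \<Phi> K. R = connected_component_set (catalan_complement \<Phi> K) x)"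

definition dominant :: "'a::euclidean_space set \<Rightarrow> 'a set \<Rightarrow> 'a set \<Rightarrow> bool" where
  "dominant \<Phi> S R \<longleftrightarrow> (\<forall>x\<in>R. \<forall>\<alpha>\<in>positive_roots \<Phi> S. x \<bullet> \<alpha> > 0)"

definition theta :: "'a::euclidean_space set \<Rightarrow> 'a set \<Rightarrow> 'a set \<Rightarrow> nat \<Rightarrow> 'a set" where
  "theta \<Phi> S R i = {\<alpha>\<in>positive_roots \<Phi> S. \<forall>x\<in>R. x \<bullet> \<alpha> < real i}"

definition chain_ext :: "'a::euclidean_space set \<Rightarrow> 'a set \<Rightarrow> nat \<Rightarrow> (nat \<Rightarrow> 'a set) \<Rightarrow> nat \<Rightarrow> 'a set" where
  "chain_ext \<Phi> S k I i =
     (if i \<le> k then I i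
      else (\<Union>i'\<in>{0..k}. \<Union>j'\<in>{0..k}.
              if i' + j' = k + 1
              then sumset (Iext I i') (Iext I j') \<inter> positive_roots \<Phi> S else {})
           \<union> I k \<union> S)"

end

theory Submission
  imports Defs
begin

text \<open>Membership in \<open>I'\<^sub>k\<^sub>+\<^sub>1\<close> is controlled by the exchange property of root
  systems: if a root is both \<open>x + y\<close> and \<open>z + w\<close>, then \<open>x - z\<close> or \<open>x - w\<close> is a root or zero.
  Applied to a decomposition \<open>z + w\<close> with \<open>z \<in> I\<^sub>a\<close>, \<open>w \<in> I\<^sub>b\<close>, \<open>a + b = k + 1\<close>, this reduces
  the ideal property of \<open>I'\<^sub>k\<^sub>+\<^sub>1\<close> and the new sum conditions to the sum conditions for
  the ideals \<open>I\<^sub>i\<close> and the filters \<open>J\<^sub>i\<close> of the given chain.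
  The geometric half is elementary: \<open>R'\<close> lies below \<open>H\<^sub>s\<^sup>k\<^sup>+\<^sup>1\<close> for every simple root \<open>s\<close>,
  hence is bounded, and it lies on the same side as \<open>R\<close> of every hyperplane of the
  \<open>k\<close>-Catalan arrangement, so segments from \<open>R\<close> to \<open>R'\<close> avoid that arrangement.\<close>

locale based_root_system =
  fixes \<Phi> S :: "'a::euclidean_space set"
  assumes crystallographic: "crystallographic_root_system \<Phi>"
    and simple: "simple_system \<Phi> S"
begin

abbreviation P :: "'a set" where "P \<equiv> positive_roots \<Phi> S"

lemma finite_roots: "finite \<Phi>"
  and zero_not_root: "0 \<notin> \<Phi>"
  and root_multiple_cases: "\<And>\<alpha> c. \<alpha> \<in> \<Phi> \<Longrightarrow> c *\<^sub>R \<alpha> \<in> \<Phi> \<Longrightarrow> c = 1 \<or> c = -1"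
  and refl_vec_root: "\<And>\<alpha> \<beta>. \<alpha> \<in> \<Phi> \<Longrightarrow> \<beta> \<in> \<Phi> \<Longrightarrow> refl_vec \<alpha> \<beta> \<in> \<Phi>"
  and cartan_integer: "\<And>\<alpha> \<beta>. \<alpha> \<in> \<Phi> \<Longrightarrow> \<beta> \<in> \<Phi> \<Longrightarrow> 2 * (\<beta> \<bullet> \<alpha>) / (\<alpha> \<bullet> \<alpha>) \<in> \<int>"
  using crystallographic unfolding crystallographic_root_system_def by auto

lemma simple_subset_roots: "S \<subseteq> \<Phi>"
  and independent_simple: "independent S"
  and span_simple: "span S = UNIV"
  and root_sign_coeffs: "\<And>\<alpha>. \<alpha> \<in> \<Phi> \<Longrightarrow> \<exists>c::'a \<Rightarrow> real. \<alpha> = (\<Sum>s\<in>S. c s *\<^sub>R s) \<and>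
                 ((\<forall>s\<in>S. c s \<ge> 0) \<or> (\<forall>s\<in>S. c s \<le> 0))"
  using simple unfolding simple_system_def by auto

lemma finite_simple: "finite S"
  using simple_subset_roots finite_roots finite_subset by blast

lemma uminus_root: assumes "\<alpha> \<in> \<Phi>" shows "- \<alpha> \<in> \<Phi>"
proof -
  have "refl_vec \<alpha> \<alpha> = - \<alpha>"
    using assms zero_not_root unfolding refl_vec_def by (auto simp: scaleR_2)
  then show ?thesis using refl_vec_root[OF assms assms] by simp
qed

lemma uminus_insert_zero_root: "x \<in> insert 0 \<Phi> \<Longrightarrow> - x \<in> insert 0 \<Phi>"
  using uminus_root by auto

lemma root_inner_abs_less:
  assumes "\<alpha> \<in> \<Phi>" "\<beta> \<in> \<Phi>" "\<beta> \<noteq> \<alpha>" "\<beta> \<noteq> - \<alpha>"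
  shows "\<bar>\<alpha> \<bullet> \<beta>\<bar> < norm \<alpha> * norm \<beta>"
proof -
  have "\<bar>\<alpha> \<bullet> \<beta>\<bar> \<noteq> norm \<alpha> * norm \<beta>"
  proof
    assume "\<bar>\<alpha> \<bullet> \<beta>\<bar> = norm \<alpha> * norm \<beta>"
    then have "norm \<alpha> *\<^sub>R \<beta> = norm \<beta> *\<^sub>R \<alpha> \<or> norm \<alpha> *\<^sub>R \<beta> = - norm \<beta> *\<^sub>R \<alpha>"
      using norm_cauchy_schwarz_abs_eq by blast
    moreover have "norm \<alpha> \<noteq> 0" using assms(1) zero_not_root by auto
    ultimately obtain c where "\<beta> = c *\<^sub>R \<alpha>"
      by (metis (no_types, lifting) scaleR_scaleR divide_inverse_commute left_inverse scaleR_one)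
    then show False
      using root_multiple_cases[OF assms(1), of c] assms(2-4) by auto
  qed
  then show ?thesis using Cauchy_Schwarz_ineq2[of \<alpha> \<beta>] by linarith
qed

text \<open>The two Cartan integers of \<open>\<alpha>, \<beta>\<close> are positive with product \<open>< 4\<close> (strict
  Cauchy--Schwarz), so one of them is \<open>1\<close> and a reflection maps one root to \<open>\<plusminus>(\<alpha> - \<beta>)\<close>.\<close>

lemma root_diff_mem_roots:
  assumes "\<alpha> \<in> \<Phi>" "\<beta> \<in> \<Phi>" "\<alpha> \<bullet> \<beta> > 0" "\<alpha> \<noteq> \<beta>"
  shows "\<alpha> - \<beta> \<in> \<Phi>"
proof -
  have pos: "\<alpha> \<bullet> \<alpha> > 0" "\<beta> \<bullet> \<beta> > 0" using assms(1,2) zero_not_root by auto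
  have "\<beta> \<noteq> - \<alpha>" using assms(3) pos(1) by (smt (verit) inner_minus_right)
  then have "\<bar>\<alpha> \<bullet> \<beta>\<bar> < norm \<alpha> * norm \<beta>"
    using root_inner_abs_less[OF assms(1,2)] assms(4) by metis
  then have "(\<alpha> \<bullet> \<beta>)\<^sup>2 < (norm \<alpha> * norm \<beta>)\<^sup>2"
    by (metis abs_ge_zero power2_abs power_strict_mono zero_less_numeral)
  then have lt: "(\<alpha> \<bullet> \<beta>)\<^sup>2 < (\<alpha> \<bullet> \<alpha>) * (\<beta> \<bullet> \<beta>)"
    by (simp add: power_mult_distrib power2_norm_eq_inner)
  obtain i j where i: "2 * (\<alpha> \<bullet> \<beta>) / (\<beta> \<bullet> \<beta>) = of_int i"
    and j: "2 * (\<alpha> \<bullet> \<beta>) / (\<alpha> \<bullet> \<alpha>) = of_int j"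
    using cartan_integer[OF assms(2,1)] cartan_integer[OF assms(1,2)]
    by (metis Ints_cases inner_commute)
  have "(of_int (i * j) :: real) = 4 * (\<alpha> \<bullet> \<beta>)\<^sup>2 / ((\<alpha> \<bullet> \<alpha>) * (\<beta> \<bullet> \<beta>))"
    by (simp flip: i j add: power2_eq_square)
  also have "\<dots> < 4" using lt pos by (simp add: divide_less_eq)
  finally have "i * j < 4" by linarith
  have "(of_int i :: real) > 0" "(of_int j :: real) > 0"
    unfolding i[symmetric] j[symmetric] using pos assms(3) by simp_all
  then have "i > 0" "j > 0" by simp_all
  have "i = 1 \<or> j = 1"
  proof (rule ccontr)
    assume "\<not> (i = 1 \<or> j = 1)"
    then have "2 \<le> i" "2 \<le> j" using \<open>i > 0\<close> \<open>j > 0\<close> by auto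
    then have "2 * 2 \<le> i * j" by (intro mult_mono) auto
    with \<open>i * j < 4\<close> show False by simp
  qed
  then show ?thesis
  proof
    assume "i = 1"
    then have "refl_vec \<beta> \<alpha> = \<alpha> - \<beta>" using i assms(3) unfolding refl_vec_def by (simp add: inner_commute)
    then show ?thesis using refl_vec_root[OF assms(2,1)] by simp
  next
    assume "j = 1"
    then have "refl_vec \<alpha> \<beta> = - (\<alpha> - \<beta>)" using j assms(3) unfolding refl_vec_def by (simp add: inner_commute)
    then show ?thesis using uminus_root[OF refl_vec_root[OF assms(1,2)]] by simp
  qed
qed

lemma root_diff_mem_insert_zero:
  "\<alpha> \<in> \<Phi> \<Longrightarrow> \<beta> \<in> \<Phi> \<Longrightarrow> \<alpha> \<bullet> \<beta> > 0 \<Longrightarrow> \<alpha> - \<beta> \<in> insert 0 \<Phi>"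
  using root_diff_mem_roots by (cases "\<alpha> = \<beta>") auto

lemma inner_sum_root_pos:
  assumes "z \<in> \<Phi>" "w \<in> \<Phi>" "z + w \<in> \<Phi>" "w \<bullet> w \<le> z \<bullet> z"
  shows "z \<bullet> (z + w) > 0"
proof -
  have "w \<noteq> z" using root_multiple_cases[OF assms(1), of 2] assms(3) by (auto simp: scaleR_2)
  moreover have "w \<noteq> - z" using assms(3) zero_not_root by auto
  ultimately have "\<bar>z \<bullet> w\<bar> < norm z * norm w" using root_inner_abs_less[OF assms(1,2)] by blast
  also have "\<dots> \<le> norm z * norm z"
    using assms(4) by (intro mult_left_mono) (auto simp: norm_eq_sqrt_inner)
  also have "\<dots> = z \<bullet> z" by (simp add: norm_eq_sqrt_inner)
  finally show ?thesis by (simp add: inner_add_right abs_less_iff)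
qed

text \<open>The longer of \<open>z, w\<close> has positive inner product with \<open>z + w = x + y\<close>, hence with
  \<open>x\<close> or with \<open>y\<close>; and \<open>y - z = - (x - w)\<close>.\<close>

lemma root_sum_exchange_longer:
  assumes "x \<in> \<Phi>" "y \<in> \<Phi>" "z \<in> \<Phi>" "w \<in> \<Phi>" "z + w \<in> \<Phi>" "x + y = z + w" "w \<bullet> w \<le> z \<bullet> z"
  shows "x - z \<in> insert 0 \<Phi> \<or> x - w \<in> insert 0 \<Phi>"
proof -
  have "x \<bullet> z > 0 \<or> y \<bullet> z > 0"
    using inner_sum_root_pos[OF assms(3,4,5,7)] assms(6)
    by (smt (verit) inner_add_right inner_commute)
  moreover have "x - w = - (y - z)" using assms(6) by (simp add: algebra_simps)
  ultimately show ?thesis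
    using root_diff_mem_insert_zero assms(1-3) uminus_insert_zero_root by metis
qed

lemma root_sum_exchange:
  assumes "x \<in> \<Phi>" "y \<in> \<Phi>" "z \<in> \<Phi>" "w \<in> \<Phi>" "z + w \<in> \<Phi>" "x + y = z + w"
  shows "x - z \<in> insert 0 \<Phi> \<or> x - w \<in> insert 0 \<Phi>"
proof (cases "w \<bullet> w \<le> z \<bullet> z")
  case True
  then show ?thesis using root_sum_exchange_longer[OF assms] by blast
next
  case False
  then show ?thesis
    using root_sum_exchange_longer[of x y w z] assms by (auto simp: add.commute)
qed

lemma positive_rootI:
  "\<alpha> \<in> \<Phi> \<Longrightarrow> \<alpha> = (\<Sum>s\<in>S. c s *\<^sub>R s) \<Longrightarrow> \<forall>s\<in>S. c s \<ge> 0 \<Longrightarrow> \<alpha> \<in> P"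
  unfolding positive_roots_def by auto

lemma positive_rootE:
  assumes "\<alpha> \<in> P"
  obtains c where "\<alpha> = (\<Sum>s\<in>S. c s *\<^sub>R s)" "\<forall>s\<in>S. c s \<ge> 0"
  using assms unfolding positive_roots_def by auto

lemma positive_root_mem_roots: "\<alpha> \<in> P \<Longrightarrow> \<alpha> \<in> \<Phi>"
  unfolding positive_roots_def by auto

lemma root_positive_or_negative:
  assumes "\<alpha> \<in> \<Phi>"
  shows "\<alpha> \<in> P \<or> - \<alpha> \<in> P"
proof -
  obtain c where c: "\<alpha> = (\<Sum>s\<in>S. c s *\<^sub>R s)" "(\<forall>s\<in>S. c s \<ge> 0) \<or> (\<forall>s\<in>S. c s \<le> 0)"
    using root_sign_coeffs[OF assms] by blast
  have "- \<alpha> = (\<Sum>s\<in>S. (- c s) *\<^sub>R s)" using c(1) by (simp add: sum_negf)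
  then show ?thesis
    using c positive_rootI[OF assms c(1)] positive_rootI[OF uminus_root[OF assms], of "\<lambda>s. - c s"]
    by auto
qed

lemma coeffs_zero_if_sum_zero:
  assumes "(\<Sum>s\<in>S. e s *\<^sub>R s) = 0" "t \<in> S"
  shows "e t = 0"
  using independent_simple dependent_finite[OF finite_simple] assms by blast

lemma sum_indicator_simple:
  assumes "t \<in> S"
  shows "(\<Sum>s\<in>S. (if s = t then 1 else 0) *\<^sub>R s) = t"
proof -
  have "(\<Sum>s\<in>S. (if s = t then 1 else 0) *\<^sub>R s) = (\<Sum>s\<in>S. if s = t then s else 0)"
    by (rule sum.cong) auto
  also have "\<dots> = t" using finite_simple assms by (simp add: sum.delta')
  finally show ?thesis .
qed

lemma simple_subset_positive: "S \<subseteq> P"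
proof
  fix t assume "t \<in> S"
  then show "t \<in> P"
    using positive_rootI[of t "\<lambda>s. if s = t then 1 else 0"] sum_indicator_simple simple_subset_roots
    by auto
qed

lemma positive_root_add_nonneg:
  assumes "\<alpha> \<in> P" "\<gamma> \<in> \<Phi>" "\<gamma> = \<alpha> + (\<Sum>s\<in>S. e s *\<^sub>R s)" "\<forall>s\<in>S. e s \<ge> 0"
  shows "\<gamma> \<in> P"
proof -
  obtain c where c: "\<alpha> = (\<Sum>s\<in>S. c s *\<^sub>R s)" "\<forall>s\<in>S. c s \<ge> 0"
    using positive_rootE[OF assms(1)] by blast
  have "\<gamma> = (\<Sum>s\<in>S. (c s + e s) *\<^sub>R s)"
    using assms(3) c(1) by (simp add: scaleR_add_left sum.distrib)
  then show ?thesis using positive_rootI[OF assms(2)] c(2) assms(4) by (simp add: add_nonneg_nonneg)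
qed

lemma positive_add_positive_coeffs:
  assumes "\<alpha> \<in> P" "\<beta> \<in> P"
  obtains c d where "\<alpha> = (\<Sum>s\<in>S. c s *\<^sub>R s)" "\<beta> = (\<Sum>s\<in>S. d s *\<^sub>R s)"
    "\<forall>s\<in>S. c s \<ge> 0" "\<forall>s\<in>S. d s \<ge> 0" "\<alpha> + \<beta> = (\<Sum>s\<in>S. (c s + d s) *\<^sub>R s)"
proof -
  obtain c where c: "\<alpha> = (\<Sum>s\<in>S. c s *\<^sub>R s)" "\<forall>s\<in>S. c s \<ge> 0"
    using positive_rootE[OF assms(1)] .
  obtain d where d: "\<beta> = (\<Sum>s\<in>S. d s *\<^sub>R s)" "\<forall>s\<in>S. d s \<ge> 0"
    using positive_rootE[OF assms(2)] .
  show thesis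
    by (rule that[OF c(1) d(1) c(2) d(2)]) (simp add: c(1) d(1) scaleR_add_left sum.distrib)
qed

lemma positive_not_uminus_positive:
  assumes "\<alpha> \<in> P"
  shows "- \<alpha> \<notin> P"
proof
  assume "- \<alpha> \<in> P"
  then obtain c d where cd: "\<alpha> = (\<Sum>s\<in>S. c s *\<^sub>R s)" "- \<alpha> = (\<Sum>s\<in>S. d s *\<^sub>R s)"
    "\<forall>s\<in>S. c s \<ge> 0" "\<forall>s\<in>S. d s \<ge> 0" "\<alpha> + - \<alpha> = (\<Sum>s\<in>S. (c s + d s) *\<^sub>R s)"
    by (rule positive_add_positive_coeffs[OF assms])
  have "(\<Sum>s\<in>S. (c s + d s) *\<^sub>R s) = 0" using cd(5) by simp
  then have "\<forall>t\<in>S. c t + d t = 0"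
    using coeffs_zero_if_sum_zero[of "\<lambda>s. c s + d s"] by blast
  then have "\<forall>t\<in>S. c t = 0" using cd(3,4) by force
  then have "\<alpha> = 0" using cd(1) by simp
  then show False using assms positive_root_mem_roots zero_not_root by blast
qed

lemma simple_not_add_positive:
  assumes "s \<in> S" "\<alpha> \<in> P" "\<beta> \<in> P"
  shows "s \<noteq> \<alpha> + \<beta>"
proof
  assume sum: "s = \<alpha> + \<beta>"
  obtain c d where cd: "\<alpha> = (\<Sum>s\<in>S. c s *\<^sub>R s)" "\<beta> = (\<Sum>s\<in>S. d s *\<^sub>R s)"
    "\<forall>s\<in>S. c s \<ge> 0" "\<forall>s\<in>S. d s \<ge> 0" "\<alpha> + \<beta> = (\<Sum>s\<in>S. (c s + d s) *\<^sub>R s)"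
    by (rule positive_add_positive_coeffs[OF assms(2,3)])
  have "(\<Sum>t\<in>S. (c t + d t - (if t = s then 1 else 0)) *\<^sub>R t) = \<alpha> + \<beta> - s"
    using cd(5) sum_indicator_simple[OF assms(1)]
    by (simp add: scaleR_diff_left sum_subtractf)
  then have coeffs: "c t + d t = (if t = s then 1 else 0)" if "t \<in> S" for t
    using coeffs_zero_if_sum_zero[OF _ that] sum by fastforce
  have multiple: "\<gamma> = e s *\<^sub>R s" if "\<gamma> = (\<Sum>t\<in>S. e t *\<^sub>R t)" "\<forall>t\<in>S. t \<noteq> s \<longrightarrow> e t = 0" for \<gamma> e
  proof -
    have "(\<Sum>t\<in>S. e t *\<^sub>R t) = (\<Sum>t\<in>S. if t = s then e s *\<^sub>R s else 0)"
      using that(2) by (intro sum.cong) auto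
    then show ?thesis using that(1) finite_simple assms(1) by (simp add: sum.delta')
  qed
  have "\<forall>t\<in>S. t \<noteq> s \<longrightarrow> c t = 0 \<and> d t = 0"
    using coeffs cd(3,4) by (metis add_nonneg_eq_0_iff)
  then have "\<alpha> = c s *\<^sub>R s" "\<beta> = d s *\<^sub>R s"
    using multiple cd(1,2) by auto
  then have "c s = 1 \<or> c s = -1" "d s = 1 \<or> d s = -1"
    using root_multiple_cases[of s] assms positive_root_mem_roots simple_subset_roots by auto
  moreover have "c s + d s = 1" "c s \<ge> 0" "d s \<ge> 0" using coeffs[OF assms(1)] cd(3,4) assms(1) by auto
  ultimately show False by linarith
qed

lemma root_le_minus_simple: "s \<in> S \<Longrightarrow> root_le S (\<beta> - s) \<beta>"
  unfolding root_le_def using sum_indicator_simple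
  by (intro exI[of _ "\<lambda>t. if t = s then 1 else 0"]) (auto simp: if_distrib cong: if_cong)

text \<open>As \<open>(\<beta> - \<alpha>) \<bullet> (\<beta> - \<alpha>) > 0\<close>, some simple root \<open>t\<close> occurring in \<open>\<beta> - \<alpha>\<close> has
  \<open>t \<bullet> (\<beta> - \<alpha>) > 0\<close>, so \<open>t \<bullet> \<beta> > 0\<close> or \<open>t \<bullet> \<alpha> < 0\<close>.\<close>

lemma root_le_simple_step:
  assumes "\<alpha> \<in> P" "\<beta> \<in> P" "\<alpha> \<noteq> \<beta>" "\<beta> - \<alpha> = (\<Sum>s\<in>S. real (n s) *\<^sub>R s)"
  obtains t n' where "t \<in> S" "\<beta> - \<alpha> = t + (\<Sum>s\<in>S. real (n' s) *\<^sub>R s)" "sum n' S < sum n S"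
    "\<beta> - t \<in> P \<or> \<alpha> + t \<in> P"
proof -
  have "0 < (\<beta> - \<alpha>) \<bullet> (\<beta> - \<alpha>)" using assms(3) by simp
  also have "\<dots> = (\<Sum>s\<in>S. real (n s) * (s \<bullet> (\<beta> - \<alpha>)))"
    by (subst (1) assms(4)) (simp add: inner_sum_left)
  finally obtain t where t: "t \<in> S" "0 < real (n t) * (t \<bullet> (\<beta> - \<alpha>))"
    by (metis (no_types, lifting) not_less sum_nonpos)
  then have "0 < n t" "0 < t \<bullet> \<beta> \<or> t \<bullet> \<alpha> < 0"
    by (auto simp: zero_less_mult_iff inner_diff_right)
  define n' where "n' = n(t := n t - 1)"
  have "(\<Sum>s\<in>S. real (n s) *\<^sub>R s) = (\<Sum>s\<in>S. (real (n' s) + (if s = t then 1 else 0)) *\<^sub>R s)"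
    using \<open>0 < n t\<close> unfolding n'_def by (intro sum.cong) auto
  then have diff: "\<beta> - \<alpha> = t + (\<Sum>s\<in>S. real (n' s) *\<^sub>R s)"
    using assms(4) sum_indicator_simple[OF t(1)] by (simp add: scaleR_add_left sum.distrib)
  have "sum n S = sum n' S + 1"
    using \<open>0 < n t\<close> t(1) finite_simple unfolding n'_def by (simp add: sum.remove)
  then have less: "sum n' S < sum n S" by simp
  have roots: "\<alpha> \<in> \<Phi>" "\<beta> \<in> \<Phi>" "t \<in> \<Phi>"
    using assms(1,2) t(1) positive_root_mem_roots simple_subset_roots by auto
  have nonneg: "\<forall>s\<in>S. real (n' s) \<ge> 0" by simp
  have "\<beta> - t \<in> P \<or> \<alpha> + t \<in> P"
    using \<open>0 < t \<bullet> \<beta> \<or> t \<bullet> \<alpha> < 0\<close>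
  proof
    assume "0 < t \<bullet> \<beta>"
    have "\<beta> \<noteq> t"
    proof
      assume "\<beta> = t"
      then have "\<alpha> + (\<Sum>s\<in>S. real (n' s) *\<^sub>R s) = 0" using diff by (simp add: algebra_simps)
      then have "- \<alpha> = (\<Sum>s\<in>S. real (n' s) *\<^sub>R s)" by (metis add.commute neg_eq_iff_add_eq_0)
      then show False
        using positive_rootI[OF uminus_root[OF roots(1)] _ nonneg] positive_not_uminus_positive assms(1)
        by blast
    qed
    then have "\<beta> - t \<in> \<Phi>" using root_diff_mem_roots roots \<open>0 < t \<bullet> \<beta>\<close> by (simp add: inner_commute)
    moreover have "\<beta> - t = \<alpha> + (\<Sum>s\<in>S. real (n' s) *\<^sub>R s)" using diff by (simp add: algebra_simps)
    ultimately show ?thesis using positive_root_add_nonneg[OF assms(1) _ _ nonneg] by blast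
  next
    assume "t \<bullet> \<alpha> < 0"
    moreover have "\<alpha> \<noteq> - t"
      using positive_not_uminus_positive assms(1) simple_subset_positive t(1) by auto
    ultimately have "\<alpha> + t \<in> \<Phi>"
      using root_diff_mem_roots[OF roots(1) uminus_root[OF roots(3)]] by (simp add: inner_commute)
    moreover have "\<alpha> + t = \<alpha> + (\<Sum>s\<in>S. (if s = t then 1 else 0) *\<^sub>R s)"
      using sum_indicator_simple[OF t(1)] by simp
    ultimately show ?thesis
      using positive_root_add_nonneg[OF assms(1), of _ "\<lambda>s. if s = t then 1 else 0"] by simp
  qed
  with t(1) diff less show thesis by (rule that)
qed

lemma root_idealI_simple:
  assumes "X \<subseteq> P" and closed: "\<And>\<beta> s. \<beta> \<in> X \<Longrightarrow> s \<in> S \<Longrightarrow> \<beta> - s \<in> P \<Longrightarrow> \<beta> - s \<in> X"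
  shows "root_ideal \<Phi> S X"
proof -
  have "\<alpha> \<in> X" if "\<beta> \<in> X" "\<alpha> \<in> P" "\<beta> - \<alpha> = (\<Sum>s\<in>S. real (n s) *\<^sub>R s)" for n \<alpha> \<beta>
    using that
  proof (induction "sum n S" arbitrary: n \<alpha> \<beta> rule: less_induct)
    case less
    show ?case
    proof (cases "\<alpha> = \<beta>")
      case False
      obtain t n' where t: "t \<in> S" "\<beta> - \<alpha> = t + (\<Sum>s\<in>S. real (n' s) *\<^sub>R s)" "sum n' S < sum n S"
        "\<beta> - t \<in> P \<or> \<alpha> + t \<in> P"
        using root_le_simple_step[OF less.prems(2) _ False less.prems(3)] less.prems(1) assms(1)
        by blast
      from t(4) show ?thesis
      proof
        assume "\<beta> - t \<in> P"
        then have "\<beta> - t \<in> X" using closed less.prems(1) t(1) by blast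
        moreover have "(\<beta> - t) - \<alpha> = (\<Sum>s\<in>S. real (n' s) *\<^sub>R s)" using t(2) by (simp add: algebra_simps)
        ultimately show ?thesis using less.hyps[OF t(3)] less.prems(2) by blast
      next
        assume "\<alpha> + t \<in> P"
        moreover have "\<beta> - (\<alpha> + t) = (\<Sum>s\<in>S. real (n' s) *\<^sub>R s)" using t(2) by (simp add: algebra_simps)
        ultimately have "\<alpha> + t \<in> X" using less.hyps[OF t(3)] less.prems(1) by blast
        then show ?thesis using closed[OF _ t(1)] less.prems(2) by force
      qed
    qed (use less.prems in simp)
  qed
  then show ?thesis using assms(1) unfolding root_ideal_def root_le_def by blast
qed

end

lemma catalan_region_same_side:
  assumes "catalan_region \<Phi> K R" "\<alpha> \<in> \<Phi>" "r \<le> K" "y \<in> R" "z \<in> R" "y \<bullet> \<alpha> < real r"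
  shows "z \<bullet> \<alpha> < real r"
proof (rule ccontr)
  assume "\<not> z \<bullet> \<alpha> < real r"
  obtain x0 where R: "R = connected_component_set (catalan_complement \<Phi> K) x0"
    using assms(1) unfolding catalan_region_def by blast
  then obtain p where "p \<in> R" "\<alpha> \<bullet> p = real r"
    using connected_ivt_hyperplane[of R y z \<alpha> "real r"] assms(4-6) \<open>\<not> z \<bullet> \<alpha> < real r\<close>
    by (auto simp: inner_commute)
  moreover have "p \<in> catalan_complement \<Phi> K" using \<open>p \<in> R\<close> R connected_component_subset by blast
  ultimately show False using assms(2,3) unfolding catalan_complement_def by (auto simp: inner_commute)
qed

lemma same_side_in_connected_component:
  assumes "x0 \<in> catalan_complement \<Phi> K" "x \<in> catalan_complement \<Phi> K"
    and same_side: "\<And>\<alpha> r. \<alpha> \<in> \<Phi> \<Longrightarrow> r \<le> K \<Longrightarrow> x0 \<bullet> \<alpha> < real r \<longleftrightarrow> x \<bullet> \<alpha> < real r"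
  shows "x \<in> connected_component_set (catalan_complement \<Phi> K) x0"
proof -
  have "p \<bullet> \<alpha> \<noteq> real r" if "p \<in> closed_segment x0 x" "\<alpha> \<in> \<Phi>" "r \<le> K" for p \<alpha> r
  proof (cases "x0 \<bullet> \<alpha> < real r")
    case True
    then have "closed_segment x0 x \<subseteq> {p. \<alpha> \<bullet> p < real r}"
      using same_side[OF that(2,3)] by (intro closed_segment_subset convex_halfspace_lt) (auto simp: inner_commute)
    then show ?thesis using that(1) by (auto simp: inner_commute)
  next
    case False
    then have "x0 \<bullet> \<alpha> > real r" "x \<bullet> \<alpha> > real r"
      using same_side[OF that(2,3)] assms(1,2) that(2,3) unfolding catalan_complement_def by force+
    then have "closed_segment x0 x \<subseteq> {p. \<alpha> \<bullet> p > real r}"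
      by (intro closed_segment_subset convex_halfspace_gt) (auto simp: inner_commute)
    then show ?thesis using that(1) by (auto simp: inner_commute)
  qed
  then have "closed_segment x0 x \<subseteq> catalan_complement \<Phi> K"
    unfolding catalan_complement_def by auto
  then have "closed_segment x0 x \<subseteq> connected_component_set (catalan_complement \<Phi> K) x0"
    by (intro connected_component_maximal) auto
  then show ?thesis by auto
qed

lemma bounded_if_inner_spanning_bounded:
  fixes S :: "'a::euclidean_space set"
  assumes "finite S" "span S = UNIV" "\<And>x s. x \<in> X \<Longrightarrow> s \<in> S \<Longrightarrow> \<bar>x \<bullet> s\<bar> \<le> B"
  shows "bounded X"
proof -
  have "\<forall>b. \<exists>u. b = (\<Sum>v\<in>S. u v *\<^sub>R v)"
    using span_finite[OF assms(1)] assms(2) by auto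
  then obtain d where d: "\<And>b. b = (\<Sum>v\<in>S. d b v *\<^sub>R v)" by metis
  have "norm x \<le> (\<Sum>b\<in>Basis. \<Sum>v\<in>S. \<bar>d b v\<bar> * B)" if "x \<in> X" for x
  proof -
    have "\<bar>x \<bullet> b\<bar> \<le> (\<Sum>v\<in>S. \<bar>d b v\<bar> * B)" for b
    proof -
      have "\<bar>x \<bullet> b\<bar> = \<bar>\<Sum>v\<in>S. d b v * (x \<bullet> v)\<bar>" by (subst d[of b]) (simp add: inner_sum_right)
      also have "\<dots> \<le> (\<Sum>v\<in>S. \<bar>d b v\<bar> * B)"
        using assms(3)[OF that] by (intro order_trans[OF sum_abs sum_mono]) (simp add: abs_mult mult_left_mono)
      finally show ?thesis .
    qed
    then show ?thesis using norm_le_l1[of x] by (meson order_trans sum_mono)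
  qed
  then show ?thesis unfolding bounded_iff by blast
qed

context based_root_system
begin

lemma inner_less_iff_mem_theta:
  assumes "catalan_region \<Phi> K R" "x \<in> R" "\<alpha> \<in> P" "r \<le> K"
  shows "x \<bullet> \<alpha> < real r \<longleftrightarrow> \<alpha> \<in> theta \<Phi> S R r"
  using catalan_region_same_side[OF assms(1) positive_root_mem_roots[OF assms(3)] assms(4) assms(2)]
    assms(2,3) unfolding theta_def by auto

lemma dominant_region_bounded:
  assumes "dominant \<Phi> S R" "S \<subseteq> theta \<Phi> S R K"
  shows "bounded R"
proof (rule bounded_if_inner_spanning_bounded[OF finite_simple span_simple])
  fix x s assume "x \<in> R" "s \<in> S"
  then have "0 < x \<bullet> s" "x \<bullet> s < real K"
    using assms simple_subset_positive unfolding dominant_def theta_def by auto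
  then show "\<bar>x \<bullet> s\<bar> \<le> real K" by simp
qed

text \<open>Dominance fixes the side of every \<open>H\<^sub>\<alpha>\<^sup>0\<close>, and the sets \<open>theta \<Phi> S R i\<close> fix the sides
  of the hyperplanes \<open>H\<^sub>\<alpha>\<^sup>i\<close>, \<open>i \<ge> 1\<close>.\<close>

lemma dominant_region_subset:
  assumes "catalan_region \<Phi> K R" "dominant \<Phi> S R"
    and "catalan_region \<Phi> K' R'" "dominant \<Phi> S R'" "K \<le> K'"
    and theta_eq: "\<And>i. 1 \<le> i \<Longrightarrow> i \<le> K \<Longrightarrow> theta \<Phi> S R' i = theta \<Phi> S R i"
  shows "R' \<subseteq> R"
proof
  fix x assume "x \<in> R'"
  obtain x0 where x0: "x0 \<in> catalan_complement \<Phi> K" "R = connected_component_set (catalan_complement \<Phi> K) x0"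
    using assms(1) unfolding catalan_region_def by blast
  then have "x0 \<in> R" by simp
  obtain x1 where "R' = connected_component_set (catalan_complement \<Phi> K') x1"
    using assms(3) unfolding catalan_region_def by blast
  then have "x \<in> catalan_complement \<Phi> K'" using \<open>x \<in> R'\<close> connected_component_subset by blast
  then have "x \<in> catalan_complement \<Phi> K" using \<open>K \<le> K'\<close> unfolding catalan_complement_def by auto
  moreover have "x0 \<bullet> \<alpha> < real r \<longleftrightarrow> x \<bullet> \<alpha> < real r" if \<alpha>: "\<alpha> \<in> \<Phi>" and r: "r \<le> K" for \<alpha> r
  proof (cases "\<alpha> \<in> P \<and> r \<noteq> 0")
    case True
    then show ?thesis
      using inner_less_iff_mem_theta[OF assms(1) \<open>x0 \<in> R\<close>] inner_less_iff_mem_theta[OF assms(3) \<open>x \<in> R'\<close>]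
        theta_eq[of r] r \<open>K \<le> K'\<close> by auto
  next
    case False
    then consider "- \<alpha> \<in> P" | "\<alpha> \<in> P" "r = 0" using root_positive_or_negative[OF \<alpha>] by blast
    then show ?thesis
    proof cases
      case 1
      then have "x0 \<bullet> (- \<alpha>) > 0" "x \<bullet> (- \<alpha>) > 0"
        using assms(2,4) \<open>x0 \<in> R\<close> \<open>x \<in> R'\<close> unfolding dominant_def by blast+
      then show ?thesis by (simp add: less_le_trans[of _ 0 "real r"])
    next
      case 2
      then have "x0 \<bullet> \<alpha> > 0" "x \<bullet> \<alpha> > 0"
        using assms(2,4) \<open>x0 \<in> R\<close> \<open>x \<in> R'\<close> unfolding dominant_def by blast+
      then show ?thesis using \<open>r = 0\<close> by simp
    qed
  qed
  ultimately show "x \<in> R" using same_side_in_connected_component x0 by blast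
qed

end

locale geometric_ideal_chain = based_root_system +
  fixes k :: nat and I :: "nat \<Rightarrow> 'a set"
  assumes k_pos: "1 \<le> k" and geometric: "geometric_chain \<Phi> S k I"
begin

lemma chain_ideal: "1 \<le> i \<Longrightarrow> i \<le> k \<Longrightarrow> root_ideal \<Phi> S (I i)"
  using geometric unfolding geometric_chain_def by auto

lemma chain_subset_positive: "1 \<le> i \<Longrightarrow> i \<le> k \<Longrightarrow> I i \<subseteq> P"
  using chain_ideal unfolding root_ideal_def by blast

lemma chain_minus_simple:
  assumes "1 \<le> i" "i \<le> k" "\<beta> \<in> I i" "s \<in> S" "\<beta> - s \<in> P"
  shows "\<beta> - s \<in> I i"
  using chain_ideal[OF assms(1,2)] assms(3,5) root_le_minus_simple[OF assms(4)]
  unfolding root_ideal_def by blast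

lemma chain_mono:
  assumes "1 \<le> a" "a \<le> b" "b \<le> k"
  shows "I a \<subseteq> I b"
  using assms
proof (induction b)
  case (Suc b)
  show ?case
  proof (cases "a = Suc b")
    case False
    then have "I a \<subseteq> I b" using Suc by simp
    moreover have "I b \<subseteq> I (Suc b)"
      using geometric Suc.prems False unfolding geometric_chain_def by auto
    ultimately show ?thesis by blast
  qed simp
qed simp

lemma chain_add:
  assumes "1 \<le> a" "1 \<le> b" "a + b \<le> k" "z \<in> I a" "w \<in> I b" "z + w \<in> P"
  shows "z + w \<in> I (a + b)"
proof -
  have "sumset (Iext I a) (Iext I b) \<inter> P \<subseteq> Iext I (a + b)"
    using geometric assms(3) unfolding geometric_chain_def by auto
  moreover have "z + w \<in> sumset (Iext I a) (Iext I b)"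
    using assms unfolding sumset_def Iext_def by auto
  ultimately show ?thesis using assms unfolding Iext_def by auto
qed

lemma chain_add_notin:
  assumes "i \<le> k" "j \<le> k" "u \<in> P" "v \<in> P" "u \<notin> Iext I i" "v \<notin> Iext I j" "u + v \<in> P"
  shows "u + v \<notin> Iext I (min (i + j) k)"
proof -
  have "sumset (Jext \<Phi> S k I i) (Jext \<Phi> S k I j) \<inter> P \<subseteq> Jext \<Phi> S k I (i + j)"
    using geometric assms(1,2) unfolding geometric_chain_def by auto
  moreover have "u \<in> Jext \<Phi> S k I i" "v \<in> Jext \<Phi> S k I j"
    using assms unfolding Jext_def Iext_def by auto
  ultimately have "u + v \<in> Jext \<Phi> S k I (i + j)" using assms(7) unfolding sumset_def by blast
  then show ?thesis unfolding Jext_def Iext_def using k_pos by (auto split: if_splits)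
qed

lemma chain_split:
  assumes "v \<in> P" "t \<in> P" "v + t \<in> I n" "1 \<le> n" "n \<le> k" "m \<le> k" "v \<notin> Iext I m"
  shows "m < n \<and> t \<in> I (n - m)"
proof (cases "n \<le> m")
  case True
  have "v + t \<notin> Iext I (min (m + 0) k)"
    using chain_add_notin[of m 0] assms(1,2,3,5,6,7) chain_subset_positive[OF assms(4,5)]
    unfolding Iext_def by auto
  moreover have "v + t \<in> I m" using chain_mono[OF assms(4) True assms(6)] assms(3) by blast
  ultimately show ?thesis using True assms(4,6) unfolding Iext_def by auto
next
  case False
  have "t \<in> I (n - m)"
  proof (rule ccontr)
    assume "t \<notin> I (n - m)"
    then have "v + t \<notin> Iext I (min (m + (n - m)) k)"
      using chain_add_notin[of m "n - m"] assms chain_subset_positive[OF assms(4,5)] False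
      unfolding Iext_def by auto
    then show False using False assms(3,4,5) unfolding Iext_def by auto
  qed
  then show ?thesis using False by simp
qed

definition decomposable :: "'a \<Rightarrow> bool" where
  "decomposable x \<longleftrightarrow>
     (\<exists>a b z w. 1 \<le> a \<and> 1 \<le> b \<and> a + b = k + 1 \<and> z \<in> I a \<and> w \<in> I b \<and> x = z + w)"

lemma decomposableI:
  "1 \<le> a \<Longrightarrow> 1 \<le> b \<Longrightarrow> a + b = k + 1 \<Longrightarrow> z \<in> I a \<Longrightarrow> w \<in> I b \<Longrightarrow> decomposable (z + w)"
  unfolding decomposable_def by blast

abbreviation Ilast :: "'a set" where
  "Ilast \<equiv> chain_ext \<Phi> S k I (k + 1)"

lemma chain_ext_le: "i \<le> k \<Longrightarrow> chain_ext \<Phi> S k I i = I i"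
  unfolding chain_ext_def by simp

lemma Ilast_iff: "x \<in> Ilast \<longleftrightarrow> x \<in> I k \<or> x \<in> S \<or> (x \<in> P \<and> decomposable x)"
proof
  assume "x \<in> Ilast"
  then have "x \<in> I k \<or> x \<in> S \<or>
      (\<exists>i\<in>{0..k}. \<exists>j\<in>{0..k}. i + j = k + 1 \<and> x \<in> sumset (Iext I i) (Iext I j) \<inter> P)"
    unfolding chain_ext_def by (auto split: if_splits)
  then show "x \<in> I k \<or> x \<in> S \<or> (x \<in> P \<and> decomposable x)"
  proof (elim disjE bexE conjE)
    fix i j assume "i + j = k + 1" "x \<in> sumset (Iext I i) (Iext I j) \<inter> P"
    then show ?thesis
      using decomposableI[of i j] unfolding sumset_def Iext_def by (auto split: if_splits)
  qed auto
next
  assume "x \<in> I k \<or> x \<in> S \<or> (x \<in> P \<and> decomposable x)"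
  moreover have "x \<in> Ilast" if x: "x \<in> P" and dec: "decomposable x"
  proof -
    obtain a b z w where "1 \<le> a" "1 \<le> b" "a + b = k + 1" "z \<in> I a" "w \<in> I b" "x = z + w"
      using dec unfolding decomposable_def by blast
    then have "x \<in> sumset (Iext I a) (Iext I b) \<inter> P" "a \<in> {0..k}" "b \<in> {0..k}"
      using x unfolding sumset_def Iext_def by auto
    then show ?thesis using \<open>a + b = k + 1\<close> unfolding chain_ext_def by auto
  qed
  ultimately show "x \<in> Ilast" unfolding chain_ext_def by auto
qed

lemma decomposable_exchange:
  assumes "decomposable (x + y)" "x \<in> \<Phi>" "y \<in> \<Phi>" "x + y \<in> \<Phi>"
  obtains a b z w where "1 \<le> a" "1 \<le> b" "a + b = k + 1" "z \<in> I a" "w \<in> I b"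
    "x + y = z + w" "x - z \<in> insert 0 \<Phi>"
proof -
  obtain a b z w where d: "1 \<le> a" "1 \<le> b" "a + b = k + 1" "z \<in> I a" "w \<in> I b" "x + y = z + w"
    using assms(1) unfolding decomposable_def by blast
  then have "z \<in> \<Phi>" "w \<in> \<Phi>"
    using chain_subset_positive[of a] chain_subset_positive[of b] positive_root_mem_roots by auto
  with root_sum_exchange[OF assms(2,3) _ _ _ d(6)] assms(4) d(6)
  have "x - z \<in> insert 0 \<Phi> \<or> x - w \<in> insert 0 \<Phi>" by simp
  moreover have "b + a = k + 1" "x + y = w + z" using d(3,6) by simp_all
  ultimately show thesis using that d by blast
qed

lemma mem_Ilast_by_exchange:
  assumes "1 \<le> a" "1 \<le> b" "a + b = k + 1" "z \<in> I a" "w \<in> I b"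
    and "\<eta> \<in> P" "s \<in> S" "\<eta> + s = z + w" "\<eta> - z \<in> insert 0 \<Phi>"
  shows "\<eta> \<in> Ilast"
proof -
  have "a \<le> k" "b \<le> k" using assms(1-3) by auto
  then have "w \<in> P" using chain_subset_positive assms(2,5) by blast
  consider "\<eta> = z" | "\<eta> - z \<in> P" | "z - \<eta> \<in> P"
    using assms(9) root_positive_or_negative by fastforce
  then show ?thesis
  proof cases
    case 1
    then show ?thesis using chain_mono[OF assms(1) \<open>a \<le> k\<close> order_refl] assms(4) Ilast_iff by blast
  next
    case 2
    moreover have "\<eta> - z = w - s" using assms(8) by (simp add: algebra_simps)
    ultimately have "w - s \<in> I b" using chain_minus_simple[OF assms(2) \<open>b \<le> k\<close> assms(5,7)] by simp
    then have "decomposable (z + (w - s))" using decomposableI assms(1-4) by blast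
    moreover have "z + (w - s) = \<eta>" using assms(8) by (simp add: algebra_simps)
    ultimately show ?thesis using Ilast_iff assms(6) by auto
  next
    case 3
    moreover have "s = w + (z - \<eta>)" using assms(8) by (simp add: algebra_simps)
    ultimately show ?thesis using simple_not_add_positive[OF assms(7) \<open>w \<in> P\<close>] by blast
  qed
qed

lemma Ilast_subset_positive: "Ilast \<subseteq> P"
  using Ilast_iff chain_subset_positive[OF k_pos order_refl] simple_subset_positive by blast

lemma Ilast_ideal: "root_ideal \<Phi> S Ilast"
proof (rule root_idealI_simple[OF Ilast_subset_positive])
  fix \<beta> s assume \<beta>: "\<beta> \<in> Ilast" and s: "s \<in> S" and \<beta>s: "\<beta> - s \<in> P"
  have "s \<in> P" using s simple_subset_positive by blast
  from \<beta>[unfolded Ilast_iff] show "\<beta> - s \<in> Ilast"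
  proof (elim disjE conjE)
    assume "\<beta> \<in> I k"
    then show ?thesis using chain_minus_simple[OF k_pos order_refl _ s \<beta>s] Ilast_iff by blast
  next
    assume "\<beta> \<in> S"
    then show ?thesis using simple_not_add_positive[OF _ \<beta>s \<open>s \<in> P\<close>] by force
  next
    assume "\<beta> \<in> P" "decomposable \<beta>"
    then have "decomposable ((\<beta> - s) + s)" "\<beta> - s \<in> \<Phi>" "s \<in> \<Phi>" "(\<beta> - s) + s \<in> \<Phi>"
      using \<beta>s \<open>s \<in> P\<close> positive_root_mem_roots by auto
    then obtain a b z w where "1 \<le> a" "1 \<le> b" "a + b = k + 1" "z \<in> I a" "w \<in> I b"
      "(\<beta> - s) + s = z + w" "(\<beta> - s) - z \<in> insert 0 \<Phi>"
      by (rule decomposable_exchange)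
    then show ?thesis using mem_Ilast_by_exchange[OF _ _ _ _ _ \<beta>s s] by blast
  qed
qed

lemma no_exchange_outside_chain:
  assumes "1 \<le> a" "1 \<le> b" "a + b = k + 1" "z \<in> I a" "w \<in> I b"
    and "1 \<le> p" "1 \<le> q" "p + q = k + 1" "x \<in> P" "y \<in> P" "x \<notin> I p" "y \<notin> I q"
    and "x + y = z + w" "x - z \<in> insert 0 \<Phi>"
  shows False
proof -
  have le: "a \<le> k" "b \<le> k" "p \<le> k" "q \<le> k" using assms(1-3,6-8) by auto
  have notin: "x \<notin> Iext I p" "y \<notin> Iext I q" using assms(11,12) unfolding Iext_def by auto
  consider "x = z" | "x - z \<in> P" | "z - x \<in> P"
    using assms(14) root_positive_or_negative by fastforce
  then show False
  proof cases
    case 1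
    then have "y = w" using assms(13) by simp
    have "\<not> a \<le> p" using chain_mono[OF assms(1) _ le(3)] assms(4,11) 1 by blast
    moreover have "\<not> b \<le> q" using chain_mono[OF assms(2) _ le(4)] assms(5,12) \<open>y = w\<close> by blast
    ultimately show False using assms(3,8) by linarith
  next
    case 2
    have "y + (x - z) \<in> I b" using assms(5,13) by (simp add: algebra_simps)
    then have "q < b" "x - z \<in> I (b - q)"
      using chain_split[OF assms(10) 2 _ assms(2) le(2) le(4) notin(2)] by auto
    moreover have "a + (b - q) = p" using \<open>q < b\<close> assms(3,8) by linarith
    ultimately have "z + (x - z) \<in> I p"
      using chain_add[OF assms(1) _ _ assms(4), of "b - q" "x - z"] assms(9) le(3) by auto
    then show False using assms(11) by simp
  next
    case 3
    have "x + (z - x) \<in> I a" using assms(4) by simp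
    then have "p < a" "z - x \<in> I (a - p)"
      using chain_split[OF assms(9) 3 _ assms(1) le(1) le(3) notin(1)] by auto
    moreover have "b + (a - p) = q" using \<open>p < a\<close> assms(3,8) by linarith
    moreover have "w + (z - x) = y" using assms(13) by (simp add: algebra_simps)
    ultimately have "y \<in> I q"
      using chain_add[OF assms(2) _ _ assms(5), of "a - p" "z - x"] assms(10) le(4) by auto
    then show False using assms(12) by simp
  qed
qed

lemma no_exchange_outside_Ilast:
  assumes "1 \<le> a" "1 \<le> b" "a + b = k + 1" "z \<in> I a" "w \<in> I b"
    and "x \<in> P" "y \<in> P" "x \<notin> Ilast" "x + y = z + w" "x - z \<in> insert 0 \<Phi>"
  shows False
proof -
  have le: "a \<le> k" "b \<le> k" using assms(1-3) by auto
  have notin: "x \<notin> I k" "\<not> decomposable x" using assms(6,8) Ilast_iff by auto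
  consider "x = z" | "x - z \<in> P" | "z - x \<in> P"
    using assms(10) root_positive_or_negative by fastforce
  then show False
  proof cases
    case 1
    then show False using chain_mono[OF assms(1) le(1) order_refl] assms(4) notin(1) by blast
  next
    case 2
    have "y + (x - z) \<in> I b" using assms(5,9) by (simp add: algebra_simps)
    then have "x - z \<in> I b"
      using chain_split[OF assms(7) 2 _ assms(2) le(2), of 0] unfolding Iext_def by auto
    then have "decomposable (z + (x - z))" using decomposableI assms(1-4) by blast
    then show False using notin(2) by simp
  next
    case 3
    have "x + (z - x) \<in> I a" using assms(4) by simp
    then show False
      using chain_split[OF assms(6) 3 _ assms(1) le(1) order_refl] notin(1) le(1) k_pos
      unfolding Iext_def by auto
  qed
qed

lemma add_notin_Ilast:
  assumes "1 \<le> p" "1 \<le> q" "p + q = k + 1" "x \<in> P" "y \<in> P" "x \<notin> I p" "y \<notin> I q" "x + y \<in> P"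
  shows "x + y \<notin> Ilast"
proof -
  have "p \<le> k" "q \<le> k" "min (p + q) k = k" using assms(1-3) by auto
  then have "x + y \<notin> I k"
    using chain_add_notin[OF \<open>p \<le> k\<close> \<open>q \<le> k\<close> assms(4,5) _ _ assms(8)] assms(1,2,6,7) k_pos
    unfolding Iext_def by auto
  moreover have "x + y \<notin> S" using simple_not_add_positive assms(4,5) by blast
  moreover have "\<not> decomposable (x + y)"
  proof
    assume "decomposable (x + y)"
    moreover have "x \<in> \<Phi>" "y \<in> \<Phi>" "x + y \<in> \<Phi>" using assms(4,5,8) positive_root_mem_roots by auto
    ultimately obtain a b z w where "1 \<le> a" "1 \<le> b" "a + b = k + 1" "z \<in> I a" "w \<in> I b"
      "x + y = z + w" "x - z \<in> insert 0 \<Phi>"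
      by (rule decomposable_exchange)
    then show False using no_exchange_outside_chain assms(1-7) by blast
  qed
  ultimately show ?thesis using Ilast_iff by blast
qed

lemma add_notin_Ilast_of_notin:
  assumes "x \<in> P" "x \<notin> Ilast" "y \<in> P" "x + y \<in> P"
  shows "x + y \<notin> Ilast"
proof -
  have "x \<notin> Iext I k" using assms(2) Ilast_iff k_pos unfolding Iext_def by auto
  then have "x + y \<notin> I k"
    using chain_add_notin[of k 0, OF order_refl _ assms(1,3) _ _ assms(4)] k_pos
    unfolding Iext_def by auto
  moreover have "x + y \<notin> S" using simple_not_add_positive assms(1,3) by blast
  moreover have "\<not> decomposable (x + y)"
  proof
    assume "decomposable (x + y)"
    moreover have "x \<in> \<Phi>" "y \<in> \<Phi>" "x + y \<in> \<Phi>" using assms(1,3,4) positive_root_mem_roots by auto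
    ultimately obtain a b z w where "1 \<le> a" "1 \<le> b" "a + b = k + 1" "z \<in> I a" "w \<in> I b"
      "x + y = z + w" "x - z \<in> insert 0 \<Phi>"
      by (rule decomposable_exchange)
    then show False using no_exchange_outside_Ilast assms(1-3) by blast
  qed
  ultimately show ?thesis using Ilast_iff by blast
qed

lemma chain_subset_Ilast: "I k \<subseteq> Ilast"
  using Ilast_iff by blast

lemma chain_ext_ideal: "1 \<le> i \<Longrightarrow> i \<le> k + 1 \<Longrightarrow> root_ideal \<Phi> S (chain_ext \<Phi> S k I i)"
  using chain_ideal chain_ext_le Ilast_ideal by (cases "i \<le> k") (auto simp: le_Suc_eq)

lemma chain_ext_mono:
  assumes "1 \<le> i" "i < k + 1"
  shows "chain_ext \<Phi> S k I i \<subseteq> chain_ext \<Phi> S k I (Suc i)"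
proof (cases "i < k")
  case True
  then show ?thesis using geometric assms chain_ext_le unfolding geometric_chain_def by simp
next
  case False
  then have "i = k" using assms by simp
  then show ?thesis using chain_subset_Ilast chain_ext_le by simp
qed

lemma chain_ext_add:
  assumes "i + j \<le> k + 1"
  shows "sumset (Iext (chain_ext \<Phi> S k I) i) (Iext (chain_ext \<Phi> S k I) j) \<inter> P
           \<subseteq> Iext (chain_ext \<Phi> S k I) (i + j)"
proof (cases "i + j \<le> k")
  case True
  then have "Iext (chain_ext \<Phi> S k I) n = Iext I n" if "n \<le> i + j" for n
    using that chain_ext_le unfolding Iext_def by simp
  then show ?thesis using geometric True unfolding geometric_chain_def by auto
next
  case False
  then have "i + j = k + 1" using assms by simp
  show ?thesis
  proof
    fix x assume "x \<in> sumset (Iext (chain_ext \<Phi> S k I) i) (Iext (chain_ext \<Phi> S k I) j) \<inter> P"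
    then obtain z w where "z \<in> Iext (chain_ext \<Phi> S k I) i" "w \<in> Iext (chain_ext \<Phi> S k I) j"
      "x = z + w" "x \<in> P"
      unfolding sumset_def by blast
    moreover from this have "i \<noteq> 0" "j \<noteq> 0" unfolding Iext_def by (auto split: if_splits)
    ultimately have "decomposable x" "x \<in> P"
      using decomposableI[of i j z w] \<open>i + j = k + 1\<close> chain_ext_le[of i] chain_ext_le[of j]
      unfolding Iext_def by auto
    then show "x \<in> Iext (chain_ext \<Phi> S k I) (i + j)"
      using Ilast_iff \<open>i + j = k + 1\<close> unfolding Iext_def by simp
  qed
qed

lemma mem_Jext_chain_ext:
  assumes "i \<le> k + 1" "x \<in> Jext \<Phi> S (k + 1) (chain_ext \<Phi> S k I) i"
  shows "x \<in> P" "i = k + 1 \<Longrightarrow> x \<notin> Ilast" "1 \<le> i \<Longrightarrow> i \<le> k \<Longrightarrow> x \<notin> I i"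
    "1 \<le> i \<Longrightarrow> x \<notin> I 1"
proof -
  show "x \<in> P" "i = k + 1 \<Longrightarrow> x \<notin> Ilast" "1 \<le> i \<Longrightarrow> i \<le> k \<Longrightarrow> x \<notin> I i"
    using assms chain_ext_le[of i] k_pos unfolding Jext_def by (auto split: if_splits)
  then show "1 \<le> i \<Longrightarrow> x \<notin> I 1"
    using chain_mono[of 1 i] chain_mono[OF order_refl k_pos order_refl] chain_subset_Ilast assms(1)
    by (cases "i \<le> k") force+
qed

lemma Jext_chain_ext_add_notin_Ilast:
  assumes "i \<le> k + 1" "j \<le> k + 1" "k + 1 \<le> i + j"
    and x: "x \<in> Jext \<Phi> S (k + 1) (chain_ext \<Phi> S k I) i"
    and y: "y \<in> Jext \<Phi> S (k + 1) (chain_ext \<Phi> S k I) j"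
    and "x + y \<in> P"
  shows "x + y \<notin> Ilast"
proof -
  note X = mem_Jext_chain_ext[OF assms(1) x] and Y = mem_Jext_chain_ext[OF assms(2) y]
  consider "i \<le> k" "j \<le> k" | "i = k + 1" "j = 0" | "i = k + 1" "1 \<le> j" | "j = k + 1" "i = 0"
    | "j = k + 1" "1 \<le> i"
    using assms(1,2) by linarith
  then show ?thesis
  proof cases
    case 1
    then have "1 \<le> i" "1 \<le> j" "1 \<le> k + 1 - i" "k + 1 - i \<le> j" using assms(3) by auto
    then have "y \<notin> I (k + 1 - i)" using Y(3) chain_mono[of "k + 1 - i" j] 1 by blast
    then show ?thesis
      using add_notin_Ilast[of i "k + 1 - i"] X(1,3) Y(1) 1 \<open>1 \<le> i\<close> assms(6) by auto
  next
    case 2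
    then show ?thesis using add_notin_Ilast_of_notin X(1,2) Y(1) assms(6) by blast
  next
    case 3
    then show ?thesis
      using add_notin_Ilast[OF k_pos order_refl] X(1,2) Y(1,4) chain_subset_Ilast assms(6) by auto
  next
    case 4
    then show ?thesis using add_notin_Ilast_of_notin Y(1,2) X(1) assms(6) by (metis add.commute)
  next
    case 5
    then show ?thesis
      using add_notin_Ilast[OF order_refl k_pos] X(1,4) Y(1,2) chain_subset_Ilast assms(6) by auto
  qed
qed

lemma chain_ext_Jext_add:
  assumes "i \<le> k + 1" "j \<le> k + 1"
  shows "sumset (Jext \<Phi> S (k + 1) (chain_ext \<Phi> S k I) i) (Jext \<Phi> S (k + 1) (chain_ext \<Phi> S k I) j) \<inter> P
           \<subseteq> Jext \<Phi> S (k + 1) (chain_ext \<Phi> S k I) (i + j)"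
proof
  fix u assume "u \<in> sumset (Jext \<Phi> S (k + 1) (chain_ext \<Phi> S k I) i)
                           (Jext \<Phi> S (k + 1) (chain_ext \<Phi> S k I) j) \<inter> P"
  then obtain x y where x: "x \<in> Jext \<Phi> S (k + 1) (chain_ext \<Phi> S k I) i"
    and y: "y \<in> Jext \<Phi> S (k + 1) (chain_ext \<Phi> S k I) j" and "u = x + y" "u \<in> P"
    unfolding sumset_def by blast
  show "u \<in> Jext \<Phi> S (k + 1) (chain_ext \<Phi> S k I) (i + j)"
  proof (cases "i + j \<le> k")
    case True
    then have "x \<notin> Iext I i" "y \<notin> Iext I j"
      using mem_Jext_chain_ext(3)[OF assms(1) x] mem_Jext_chain_ext(3)[OF assms(2) y]
      unfolding Iext_def by auto
    then have "u \<notin> Iext I (i + j)"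
      using chain_add_notin[of i j x y] True mem_Jext_chain_ext(1)[OF assms(1) x]
        mem_Jext_chain_ext(1)[OF assms(2) y] \<open>u = x + y\<close> \<open>u \<in> P\<close> by auto
    then show ?thesis using \<open>u \<in> P\<close> True chain_ext_le unfolding Jext_def Iext_def by auto
  next
    case False
    then have "u \<notin> Ilast"
      using Jext_chain_ext_add_notin_Ilast[OF assms _ x y] \<open>u = x + y\<close> \<open>u \<in> P\<close> by auto
    then show ?thesis using \<open>u \<in> P\<close> False unfolding Jext_def by auto
  qed
qed

lemma chain_ext_geometric: "geometric_chain \<Phi> S (k + 1) (chain_ext \<Phi> S k I)"
  unfolding geometric_chain_def
  using chain_ext_ideal chain_ext_mono chain_ext_add chain_ext_Jext_add by auto

lemma chain_ext_positive: "positive_chain S (k + 1) (chain_ext \<Phi> S k I)"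
  unfolding positive_chain_def using Ilast_iff by blast

end

theorem lemma9:
  fixes \<Phi> S :: "'a::euclidean_space set"
    and k :: nat
    and I :: "nat \<Rightarrow> 'a set"
  assumes "crystallographic_root_system \<Phi>"
    and "irreducible_root_system \<Phi>"
    and "simple_system \<Phi> S"
    and "k \<ge> 1"
    and "geometric_chain \<Phi> S k I"
  shows "geometric_chain \<Phi> S (k + 1) (chain_ext \<Phi> S k I)
       \<and> positive_chain S (k + 1) (chain_ext \<Phi> S k I)
       \<and> (\<forall>R R'. catalan_region \<Phi> k R \<and> dominant \<Phi> S R
                  \<and> (\<forall>i\<in>{1..k}. theta \<Phi> S R i = I i)
                \<and> catalan_region \<Phi> (k + 1) R' \<and> dominant \<Phi> S R'
                  \<and> (\<forall>i\<in>{1..k+1}. theta \<Phi> S R' i = chain_ext \<Phi> S k I i)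
                \<longrightarrow> bounded R' \<and> R' \<subseteq> R)"
proof -
  interpret geometric_ideal_chain \<Phi> S k I
    using assms(1,3-5) by unfold_locales
  have "bounded R' \<and> R' \<subseteq> R"
    if "catalan_region \<Phi> k R" "dominant \<Phi> S R" "\<forall>i\<in>{1..k}. theta \<Phi> S R i = I i"
      "catalan_region \<Phi> (k + 1) R'" "dominant \<Phi> S R'"
      "\<forall>i\<in>{1..k+1}. theta \<Phi> S R' i = chain_ext \<Phi> S k I i" for R R'
  proof
    have "theta \<Phi> S R' (k + 1) = Ilast" using that(6) by simp
    then show "bounded R'"
      using dominant_region_bounded[OF that(5), of "k + 1"] Ilast_iff by blast
    show "R' \<subseteq> R"
      using dominant_region_subset[OF that(1,2,4,5)] that(3,6) chain_ext_le by simp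
  qed
  then show ?thesis using chain_ext_geometric chain_ext_positive by blast
qed

end
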